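(* Let $\alpha\ge1$ and $N\ge2$. Let $A,B$ be increasing Borel subsets of $\Omega_N$ with $\pi_{N,\alpha}(A),\pi_{N,\alpha}(B)>0$ such that $x\in A$ and $x'\in B$ imply $x\wedge x'\in B$. Then $\pi_{N,\alpha}(\cdot\mid A)$ stochastically dominates $\pi_{N,\alpha}(\cdot\mid B)$, i.e. $\pi_{N,\alpha}(f\mid A)\ge\pi_{N,\alpha}(f\mid B)$ for every increasing function $f$.
   Context: $\Omega_N=\{x\in\mathbb{R}^{N-1}:0\le x_1\le\dots\le x_{N-1}\le N\}$, $x_0=0,x_N=N$; $\pi_{N,\alpha}(dx)=\frac{\Gamma(N\alpha)}{\Gamma(\alpha)^NN^{N\alpha-1}}\prod_{i=1}^N(x_i-x_{i-1})^{\alpha-1}dx$. Increasing means w.r.t. coordinatewise order; a set is increasing if its indicator is. $(x\wedge x')_i=\min(x_i,x'_i)$. *)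

theory Defs
  imports "HOL-Analysis.Analysis"
begin

text \<open>Points of \<Omega>_N are represented as extensional functions x :: nat \<Rightarrow> real
  with domain {1..<N} (coordinates x_1,...,x_{N-1}); Lebesgue measure on R^{N-1}
  is the product measure of lborel over {1..<N}.\<close>

definition leb_N :: "nat \<Rightarrow> (nat \<Rightarrow> real) measure" where
  "leb_N N = PiM {1..<N} (\<lambda>_. lborel)"

definition xext :: "nat \<Rightarrow> (nat \<Rightarrow> real) \<Rightarrow> nat \<Rightarrow> real" where
  "xext N x i = (if i = 0 then 0 else if i = N then real N else x i)"

definition Omega :: "nat \<Rightarrow> (nat \<Rightarrow> real) set" where
  "Omega N = {x \<in> PiE {1..<N} (\<lambda>_. UNIV).
      \<forall>i\<in>{1..N}. xext N x (i - 1) \<le> xext N x i}"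

definition norm_const :: "nat \<Rightarrow> real \<Rightarrow> real" where
  "norm_const N \<alpha> = Gamma (real N * \<alpha>) / (Gamma \<alpha> ^ N * real N powr (real N * \<alpha> - 1))"

definition pi_density :: "nat \<Rightarrow> real \<Rightarrow> (nat \<Rightarrow> real) \<Rightarrow> real" where
  "pi_density N \<alpha> x = indicator (Omega N) x * norm_const N \<alpha> *
      (\<Prod>i\<in>{1..N}. (xext N x i - xext N x (i - 1)) powr (\<alpha> - 1))"

definition pi_measure :: "nat \<Rightarrow> real \<Rightarrow> (nat \<Rightarrow> real) measure" where
  "pi_measure N \<alpha> = density (leb_N N) (\<lambda>x. ennreal (pi_density N \<alpha> x))"

definition coord_le :: "nat \<Rightarrow> (nat \<Rightarrow> real) \<Rightarrow> (nat \<Rightarrow> real) \<Rightarrow> bool" where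
  "coord_le N x y \<longleftrightarrow> (\<forall>i\<in>{1..<N}. x i \<le> y i)"

definition increasing_fun :: "nat \<Rightarrow> ((nat \<Rightarrow> real) \<Rightarrow> real) \<Rightarrow> bool" where
  "increasing_fun N f \<longleftrightarrow>
     (\<forall>x\<in>Omega N. \<forall>y\<in>Omega N. coord_le N x y \<longrightarrow> f x \<le> f y)"

definition increasing_set :: "nat \<Rightarrow> (nat \<Rightarrow> real) set \<Rightarrow> bool" where
  "increasing_set N A \<longleftrightarrow> A \<subseteq> Omega N \<and> increasing_fun N (indicator A)"

definition meet :: "(nat \<Rightarrow> real) \<Rightarrow> (nat \<Rightarrow> real) \<Rightarrow> nat \<Rightarrow> real" where
  "meet x y = (\<lambda>i. min (x i) (y i))"

definition cond_exp_set :: "(nat \<Rightarrow> real) measure \<Rightarrow> ((nat \<Rightarrow> real) \<Rightarrow> real) \<Rightarrow> (nat \<Rightarrow> real) set \<Rightarrow> real" where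
  "cond_exp_set M f A = (\<integral>x. indicator A x * f x \<partial>M) / measure M A"

end

(*
  For alpha >= 1 the density p of pi_{N,alpha} is log-supermodular on the lattice Omega_N:
  it is a product of factors (x_i - x_{i-1}) powr (alpha - 1), and
  (b - a) * (d - e) <= (max b d - max a e) * (min b d - min a e) whenever a <= b and e <= d.
  Shift f to g = f - f(0), which is nonnegative on Omega_N.  For x in B and y in A the
  hypotheses give sup x y in A and inf x y in B, so the four functions p g 1_B, p 1_A,
  p g 1_A, p 1_B satisfy the hypothesis of the Ahlswede-Daykin four functions inequality,
  which yields  pi(g 1_B) pi(A) <= pi(g 1_A) pi(B),  i.e.  pi(g | B) <= pi(g | A).
  The four functions inequality on R^I follows by induction on the coordinates from the
  one-dimensional case, and that one from the two-point lattice {s < t} by pairing (s, t)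
  with (t, s).
*)

theory Submission
  imports Defs
begin

lemma add_le_add_of_mult_le:
  fixes a b c d :: real
  assumes "0 \<le> c" "0 \<le> d" "a \<le> c" "b \<le> c" "a * b \<le> c * d"
  shows "a + b \<le> c + d"
proof (cases "c = 0")
  case False
  have "0 \<le> (c - a) * (c - b)" using assms by simp
  then have "c * (a + b) \<le> c * c + a * b" by (simp add: algebra_simps)
  also have "\<dots> \<le> c * (c + d)" using assms by (simp add: algebra_simps)
  finally show ?thesis using False assms(1) by simp
qed (use assms in simp)

lemma ennreal_add_le_add_of_mult_le:
  fixes a b c d :: ennreal
  assumes "a \<le> c" "b \<le> c" "a * b \<le> c * d"
  shows "a + b \<le> c + d"
proof (cases "c = \<infinity> \<or> d = \<infinity>")
  case False
  obtain c' where c: "c = ennreal c'" "0 \<le> c'"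
    using False by (cases c rule: ennreal_cases) auto
  obtain d' where d: "d = ennreal d'" "0 \<le> d'"
    using False by (cases d rule: ennreal_cases) auto
  obtain a' where a: "a = ennreal a'" "0 \<le> a'"
    using assms(1) c by (cases a rule: ennreal_cases) (auto simp: top_unique)
  obtain b' where b: "b = ennreal b'" "0 \<le> b'"
    using assms(2) c by (cases b rule: ennreal_cases) (auto simp: top_unique)
  have "a' + b' \<le> c' + d'"
    using assms c d a b by (intro add_le_add_of_mult_le) (auto simp: ennreal_mult[symmetric])
  then show ?thesis using a b c d by (simp add: ennreal_plus[symmetric] del: ennreal_plus)
qed auto

lemma nn_integral_lborel_mult_ordered_pairs:
  fixes g h :: "real \<Rightarrow> ennreal"
  assumes [measurable]: "g \<in> borel_measurable borel" "h \<in> borel_measurable borel"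
  shows "(\<integral>\<^sup>+s. g s \<partial>lborel) * (\<integral>\<^sup>+t. h t \<partial>lborel) =
    (\<integral>\<^sup>+s. \<integral>\<^sup>+t. (if s < t then g s * h t + g t * h s else 0) \<partial>lborel \<partial>lborel)"
proof -
  let ?below = "\<lambda>s t. if s < t then g s * h t else 0"
  let ?above = "\<lambda>s t. if t < s then g s * h t else 0"
  have off_diagonal: "(\<integral>\<^sup>+t. g s * h t \<partial>lborel) = (\<integral>\<^sup>+t. ?below s t + ?above s t \<partial>lborel)" for s
    by (rule nn_integral_cong_AE) (use AE_lborel_singleton[of s] in \<open>auto elim!: eventually_mono\<close>)
  have swap: "(\<integral>\<^sup>+s. \<integral>\<^sup>+t. ?above s t \<partial>lborel \<partial>lborel) =
      (\<integral>\<^sup>+s. \<integral>\<^sup>+t. (if s < t then g t * h s else 0) \<partial>lborel \<partial>lborel)"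
    by (rule lborel_pair.Fubini'[symmetric]) measurable
  have "(\<integral>\<^sup>+s. g s \<partial>lborel) * (\<integral>\<^sup>+t. h t \<partial>lborel) = (\<integral>\<^sup>+s. \<integral>\<^sup>+t. g s * h t \<partial>lborel \<partial>lborel)"
    by (simp add: nn_integral_multc nn_integral_cmult)
  also have "\<dots> = (\<integral>\<^sup>+s. \<integral>\<^sup>+t. ?below s t \<partial>lborel \<partial>lborel) + (\<integral>\<^sup>+s. \<integral>\<^sup>+t. ?above s t \<partial>lborel \<partial>lborel)"
    by (simp add: off_diagonal nn_integral_add)
  also have "\<dots> = (\<integral>\<^sup>+s. \<integral>\<^sup>+t. (if s < t then g s * h t + g t * h s else 0) \<partial>lborel \<partial>lborel)"
    unfolding swap
    by (subst nn_integral_add[symmetric], simp_all, rule nn_integral_cong, subst nn_integral_add[symmetric])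
      (auto intro!: nn_integral_cong)
  finally show ?thesis .
qed

lemma four_functions_lborel:
  fixes g1 g2 g3 g4 :: "real \<Rightarrow> ennreal"
  assumes [measurable]: "g1 \<in> borel_measurable borel" "g2 \<in> borel_measurable borel"
    "g3 \<in> borel_measurable borel" "g4 \<in> borel_measurable borel"
  assumes four: "\<And>s t. g1 s * g2 t \<le> g3 (max s t) * g4 (min s t)"
  shows "(\<integral>\<^sup>+s. g1 s \<partial>lborel) * (\<integral>\<^sup>+t. g2 t \<partial>lborel) \<le> (\<integral>\<^sup>+s. g3 s \<partial>lborel) * (\<integral>\<^sup>+t. g4 t \<partial>lborel)"
proof -
  have pairs: "g1 s * g2 t + g1 t * g2 s \<le> g4 s * g3 t + g4 t * g3 s" if "s < t" for s t
  proof -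
    have "(g1 s * g2 t) * (g1 t * g2 s) = (g1 s * g2 s) * (g1 t * g2 t)" by (simp add: ac_simps)
    also have "\<dots> \<le> (g3 s * g4 s) * (g3 t * g4 t)"
      by (rule mult_mono) (use four[of s s] four[of t t] in simp_all)
    also have "\<dots> = (g3 t * g4 s) * (g3 s * g4 t)" by (simp add: ac_simps)
    finally have "g1 s * g2 t + g1 t * g2 s \<le> g3 t * g4 s + g3 s * g4 t"
      using four[of s t] four[of t s] that by (intro ennreal_add_le_add_of_mult_le) simp_all
    then show ?thesis by (simp add: ac_simps)
  qed
  have "(\<integral>\<^sup>+s. g1 s \<partial>lborel) * (\<integral>\<^sup>+t. g2 t \<partial>lborel) =
      (\<integral>\<^sup>+s. \<integral>\<^sup>+t. (if s < t then g1 s * g2 t + g1 t * g2 s else 0) \<partial>lborel \<partial>lborel)"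
    by (rule nn_integral_lborel_mult_ordered_pairs) measurable
  also have "\<dots> \<le> (\<integral>\<^sup>+s. \<integral>\<^sup>+t. (if s < t then g4 s * g3 t + g4 t * g3 s else 0) \<partial>lborel \<partial>lborel)"
    using pairs by (intro nn_integral_mono) simp
  also have "\<dots> = (\<integral>\<^sup>+s. g4 s \<partial>lborel) * (\<integral>\<^sup>+t. g3 t \<partial>lborel)"
    by (rule nn_integral_lborel_mult_ordered_pairs[symmetric]) measurable
  finally show ?thesis by (simp add: ac_simps)
qed

lemma four_functions_PiM_lborel:
  fixes f1 f2 f3 f4 :: "('i \<Rightarrow> real) \<Rightarrow> ennreal"
  assumes "finite I"
    and "f1 \<in> borel_measurable (PiM I (\<lambda>_. lborel))" "f2 \<in> borel_measurable (PiM I (\<lambda>_. lborel))"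
    and "f3 \<in> borel_measurable (PiM I (\<lambda>_. lborel))" "f4 \<in> borel_measurable (PiM I (\<lambda>_. lborel))"
    and "\<And>x y. x \<in> PiE I (\<lambda>_. UNIV) \<Longrightarrow> y \<in> PiE I (\<lambda>_. UNIV) \<Longrightarrow>
           f1 x * f2 y \<le> f3 (sup x y) * f4 (inf x y)"
  shows "integral\<^sup>N (PiM I (\<lambda>_. lborel)) f1 * integral\<^sup>N (PiM I (\<lambda>_. lborel)) f2
     \<le> integral\<^sup>N (PiM I (\<lambda>_. lborel)) f3 * integral\<^sup>N (PiM I (\<lambda>_. lborel)) f4"
  using assms
proof (induction I arbitrary: f1 f2 f3 f4 rule: finite_induct)
  case empty
  then show ?case by (simp add: PiM_empty nn_integral_count_space_finite)
next
  case (insert i I)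
  interpret product_sigma_finite "\<lambda>_::'i. lborel :: real measure"
    by (simp add: product_sigma_finite_def lborel.sigma_finite_measure_axioms)
  let ?M = "PiM I (\<lambda>_. lborel :: real measure)"
  define section_integral :: "(('i \<Rightarrow> real) \<Rightarrow> ennreal) \<Rightarrow> ('i \<Rightarrow> real) \<Rightarrow> ennreal"
    where "section_integral f u = (\<integral>\<^sup>+t. f (u(i:=t)) \<partial>lborel)" for f u
  note [measurable] = insert.prems(1-4)
  have section_measurable: "(\<lambda>t. f (u(i:=t))) \<in> borel_measurable borel"
    if "f \<in> borel_measurable (PiM (insert i I) (\<lambda>_. lborel))" "u \<in> space ?M" for f u
    using measurable_comp[OF measurable_component_update that(1), OF that(2) insert.hyps(2)]
    by (simp add: comp_def fun_upd_def)
  have section_integral_measurable: "section_integral f \<in> borel_measurable ?M"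
    if [measurable]: "f \<in> borel_measurable (PiM (insert i I) (\<lambda>_. lborel))" for f
    unfolding section_integral_def by measurable
  have "integral\<^sup>N ?M (section_integral f1) * integral\<^sup>N ?M (section_integral f2)
      \<le> integral\<^sup>N ?M (section_integral f3) * integral\<^sup>N ?M (section_integral f4)"
  proof (rule insert.IH[OF section_integral_measurable[OF insert.prems(1)]
        section_integral_measurable[OF insert.prems(2)] section_integral_measurable[OF insert.prems(3)]
        section_integral_measurable[OF insert.prems(4)]])
    fix u v :: "'i \<Rightarrow> real"
    assume "u \<in> PiE I (\<lambda>_. UNIV)" "v \<in> PiE I (\<lambda>_. UNIV)"
    then have space: "u \<in> space ?M" "v \<in> space ?M" "sup u v \<in> space ?M" "inf u v \<in> space ?M"
      and upd: "u(i:=s) \<in> PiE (insert i I) (\<lambda>_. UNIV)" "v(i:=t) \<in> PiE (insert i I) (\<lambda>_. UNIV)" for s t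
      by (auto simp: space_PiM PiE_def extensional_def)
    have "sup (u(i:=s)) (v(i:=t)) = (sup u v)(i := max s t)"
      and "inf (u(i:=s)) (v(i:=t)) = (inf u v)(i := min s t)" for s t
      by (auto simp: fun_eq_iff sup_max inf_min)
    then have four: "f1 (u(i:=s)) * f2 (v(i:=t)) \<le> f3 ((sup u v)(i := max s t)) * f4 ((inf u v)(i := min s t))"
      for s t
      using insert.prems(5)[OF upd] by metis
    show "section_integral f1 u * section_integral f2 v
        \<le> section_integral f3 (sup u v) * section_integral f4 (inf u v)"
      unfolding section_integral_def
      by (rule four_functions_lborel[OF section_measurable[OF insert.prems(1) space(1)]
            section_measurable[OF insert.prems(2) space(2)] section_measurable[OF insert.prems(3) space(3)]
            section_measurable[OF insert.prems(4) space(4)] four])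
  qed
  then show ?case
    unfolding section_integral_def[abs_def]
    by (simp add: product_nn_integral_insert[OF insert.hyps(1,2)] insert.prems(1-4))
qed

definition log_supermodular :: "('a::lattice \<Rightarrow> real) \<Rightarrow> bool" where
  "log_supermodular p \<longleftrightarrow> (\<forall>x y. p x * p y \<le> p (sup x y) * p (inf x y))"

lemma nn_integral_density_cross_le_of_log_supermodular:
  fixes p g :: "('i \<Rightarrow> real) \<Rightarrow> real"
  assumes "finite I"
    and [measurable]: "p \<in> borel_measurable (PiM I (\<lambda>_. lborel))" "g \<in> borel_measurable (PiM I (\<lambda>_. lborel))"
      "A \<in> sets (PiM I (\<lambda>_. lborel))" "B \<in> sets (PiM I (\<lambda>_. lborel))"
    and p: "\<And>x. 0 \<le> p x" "log_supermodular p"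
    and lattice: "\<And>x y. x \<in> B \<Longrightarrow> y \<in> A \<Longrightarrow> sup x y \<in> A \<and> inf x y \<in> B \<and> g x \<le> g (sup x y)"
  shows "(\<integral>\<^sup>+x. ennreal (g x) * indicator B x \<partial>density (PiM I (\<lambda>_. lborel)) p)
        * emeasure (density (PiM I (\<lambda>_. lborel)) p) A
      \<le> (\<integral>\<^sup>+x. ennreal (g x) * indicator A x \<partial>density (PiM I (\<lambda>_. lborel)) p)
        * emeasure (density (PiM I (\<lambda>_. lborel)) p) B"
proof -
  let ?L = "PiM I (\<lambda>_. lborel)"
  have "(\<integral>\<^sup>+x. ennreal (p x) * (ennreal (g x) * indicator B x) \<partial>?L) * (\<integral>\<^sup>+x. ennreal (p x) * indicator A x \<partial>?L)
      \<le> (\<integral>\<^sup>+x. ennreal (p x) * (ennreal (g x) * indicator A x) \<partial>?L) * (\<integral>\<^sup>+x. ennreal (p x) * indicator B x \<partial>?L)"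
  proof (rule four_functions_PiM_lborel)
    fix x y :: "'i \<Rightarrow> real"
    show "ennreal (p x) * (ennreal (g x) * indicator B x) * (ennreal (p y) * indicator A y)
        \<le> ennreal (p (sup x y)) * (ennreal (g (sup x y)) * indicator A (sup x y))
          * (ennreal (p (inf x y)) * indicator B (inf x y))"
    proof (cases "x \<in> B \<and> y \<in> A")
      case True
      have "ennreal (p x) * ennreal (p y) \<le> ennreal (p (sup x y)) * ennreal (p (inf x y))"
        using p by (simp add: log_supermodular_def ennreal_mult[symmetric] ennreal_leI)
      moreover have "ennreal (g x) \<le> ennreal (g (sup x y))"
        using lattice True by (simp add: ennreal_leI)
      ultimately show ?thesis
        using lattice True by (simp add: mult_mono ac_simps)
    qed auto
  qed (use assms in simp_all)
  then show ?thesis by (simp add: nn_integral_density emeasure_density)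
qed

lemma emeasure_finite_of_measure_pos: "0 < measure M X \<Longrightarrow> emeasure M X < \<infinity>"
  using measure_zero_top[of M X] by (auto simp: less_top[symmetric])

lemma cond_exp_set_add_const:
  assumes "X \<in> sets M" "0 < measure M X"
    and "g \<in> borel_measurable M" "\<And>x. x \<in> X \<Longrightarrow> \<bar>g x\<bar> \<le> C"
  shows "cond_exp_set M (\<lambda>x. g x + c) X = cond_exp_set M g X + c"
proof -
  have "AE x in M. x \<in> X \<longrightarrow> norm (g x) \<le> C"
    using assms(4) by (intro AE_I2) simp
  from integrableI_bounded_set_indicator[OF assms(1,3) emeasure_finite_of_measure_pos[OF assms(2)] this]
  have "integrable M (\<lambda>x. indicator X x * g x)" by simp
  moreover have "integrable M (\<lambda>x. c * indicator X x)"
    using assms(1) emeasure_finite_of_measure_pos[OF assms(2)] by (simp add: integrable_indicator_iff)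
  ultimately have "(\<integral>x. indicator X x * (g x + c) \<partial>M) = (\<integral>x. indicator X x * g x \<partial>M) + c * measure M X"
    using assms(1) by (simp add: distrib_left mult.commute)
  then show ?thesis
    using assms(2) unfolding cond_exp_set_def by (simp add: field_simps)
qed

lemma cond_exp_set_eq_nn_integral:
  assumes "Z \<in> sets M" "g \<in> borel_measurable M" "\<And>x. x \<in> Z \<Longrightarrow> 0 \<le> g x"
  shows "cond_exp_set M g Z = enn2real (\<integral>\<^sup>+x. ennreal (g x) * indicator Z x \<partial>M) / measure M Z"
proof -
  have "(\<integral>x. indicator Z x * g x \<partial>M) = enn2real (\<integral>\<^sup>+x. ennreal (indicator Z x * g x) \<partial>M)"
    using assms by (intro integral_eq_nn_integral) (auto simp: indicator_def)
  also have "(\<integral>\<^sup>+x. ennreal (indicator Z x * g x) \<partial>M) = (\<integral>\<^sup>+x. ennreal (g x) * indicator Z x \<partial>M)"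
    by (intro nn_integral_cong) (simp add: indicator_def)
  finally show ?thesis unfolding cond_exp_set_def by simp
qed

lemma cond_exp_set_le_of_nn_integral_cross:
  assumes sets: "X \<in> sets M" "Y \<in> sets M" and pos: "0 < measure M X" "0 < measure M Y"
    and f: "f \<in> borel_measurable M" "\<And>x. x \<in> X \<union> Y \<Longrightarrow> c \<le> f x \<and> f x \<le> C"
    and cross: "(\<integral>\<^sup>+x. ennreal (f x - c) * indicator Y x \<partial>M) * emeasure M X
      \<le> (\<integral>\<^sup>+x. ennreal (f x - c) * indicator X x \<partial>M) * emeasure M Y"
  shows "cond_exp_set M f Y \<le> cond_exp_set M f X"
proof -
  define g where "g x = f x - c" for x
  have g: "g \<in> borel_measurable M" "\<And>x. x \<in> X \<union> Y \<Longrightarrow> 0 \<le> g x \<and> g x \<le> C - c"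
    using f unfolding g_def by auto
  have shift: "cond_exp_set M f Z = enn2real (\<integral>\<^sup>+x. ennreal (g x) * indicator Z x \<partial>M) / measure M Z + c"
    if "Z \<in> {X, Y}" for Z
  proof -
    have "cond_exp_set M (\<lambda>x. g x + c) Z = cond_exp_set M g Z + c"
      using that sets pos g by (intro cond_exp_set_add_const[where C = "C - c"]) auto
    moreover have "cond_exp_set M g Z = enn2real (\<integral>\<^sup>+x. ennreal (g x) * indicator Z x \<partial>M) / measure M Z"
      using that sets g by (intro cond_exp_set_eq_nn_integral) auto
    ultimately show ?thesis by (simp add: g_def)
  qed
  \<comment> \<open>finiteness is essential here, since \<open>enn2real\<close> sends \<open>\<infinity>\<close> to 0\<close>
  have "(\<integral>\<^sup>+x. ennreal (g x) * indicator X x \<partial>M) \<le> (\<integral>\<^sup>+x. ennreal (C - c) * indicator X x \<partial>M)"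
    using g by (intro nn_integral_mono) (auto simp: indicator_def intro: ennreal_leI)
  also have "\<dots> < \<infinity>"
    using sets emeasure_finite_of_measure_pos[OF pos(1)]
    by (simp add: nn_integral_cmult_indicator ennreal_mult_less_top)
  finally have "enn2real ((\<integral>\<^sup>+x. ennreal (g x) * indicator Y x \<partial>M) * emeasure M X)
      \<le> enn2real ((\<integral>\<^sup>+x. ennreal (g x) * indicator X x \<partial>M) * emeasure M Y)"
    using cross pos emeasure_finite_of_measure_pos
    by (intro enn2real_mono) (auto simp: g_def ennreal_mult_less_top)
  then have "enn2real (\<integral>\<^sup>+x. ennreal (g x) * indicator Y x \<partial>M) * measure M X
      \<le> enn2real (\<integral>\<^sup>+x. ennreal (g x) * indicator X x \<partial>M) * measure M Y"
    by (simp add: enn2real_mult measure_def)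
  then have "enn2real (\<integral>\<^sup>+x. ennreal (g x) * indicator Y x \<partial>M) / measure M Y
      \<le> enn2real (\<integral>\<^sup>+x. ennreal (g x) * indicator X x \<partial>M) / measure M X"
    using pos by (simp add: divide_simps mult.commute)
  then show ?thesis by (simp add: shift)
qed

lemma diff_mult_le_max_min:
  fixes a b d e :: real
  assumes "a \<le> b" "e \<le> d"
  shows "(b - a) * (d - e) \<le> (max b d - max a e) * (min b d - min a e)"
proof -
  have crossed: "(b - a) * (d - e) \<le> (d - a) * (b - e)" if "b \<le> d" "e \<le> a" for a b d e :: real
  proof -
    have "(d - a) * (b - e) - (b - a) * (d - e) = (d - b) * (a - e)" by (simp add: algebra_simps)
    also have "\<dots> \<ge> 0" using that by simp
    finally show ?thesis by simp
  qed
  consider "b \<le> d" "e \<le> a" | "d \<le> b" "a \<le> e" | "(b - a) * (d - e) = (max b d - max a e) * (min b d - min a e)"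
    by (cases "b \<le> d"; cases "a \<le> e") (simp_all add: max_def min_def mult.commute)
  then show ?thesis
  proof cases
    case 1
    then show ?thesis using crossed by (simp add: max_def min_def)
  next
    case 2
    then show ?thesis using crossed[where a = e and b = d and d = b and e = a] by (simp add: max_def min_def mult.commute)
  qed simp
qed

lemma powr_diff_mult_le_max_min:
  fixes a b d e c :: real
  assumes "a \<le> b" "e \<le> d" "0 \<le> c"
  shows "(b - a) powr c * (d - e) powr c \<le> (max b d - max a e) powr c * (min b d - min a e) powr c"
proof -
  have "(b - a) powr c * (d - e) powr c = ((b - a) * (d - e)) powr c"
    using assms by (simp add: powr_mult)
  also have "\<dots> \<le> ((max b d - max a e) * (min b d - min a e)) powr c"
    using assms diff_mult_le_max_min[OF assms(1,2)] by (intro powr_mono2) auto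
  also have "\<dots> = (max b d - max a e) powr c * (min b d - min a e) powr c"
    using assms by (simp add: powr_mult)
  finally show ?thesis .
qed

lemma xext_measurable [measurable]: "(\<lambda>x. xext N x i) \<in> borel_measurable (leb_N N)"
proof -
  have "(\<lambda>x. xext N x i) \<in> borel_measurable (leb_N N) \<longleftrightarrow>
      (\<lambda>x. if i = 0 then 0 else if i = N then real N else x i) \<in> borel_measurable (leb_N N)"
    by (intro measurable_cong) (simp add: xext_def)
  also have "\<dots>"
  proof (cases "i \<in> {1..<N}")
    case False
    then have "(\<lambda>x. if i = 0 then 0 else if i = N then real N else x i) \<in> borel_measurable (leb_N N) \<longleftrightarrow>
        (\<lambda>x. if i = 0 then 0 else if i = N then real N else undefined) \<in> borel_measurable (leb_N N)"
      by (intro measurable_cong) (auto simp: leb_N_def space_PiM PiE_def extensional_def)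
    then show ?thesis by simp
  qed (simp add: leb_N_def)
  finally show ?thesis .
qed

lemma Omega_sets [measurable]: "Omega N \<in> sets (leb_N N)"
proof -
  have "Measurable.pred (leb_N N) (\<lambda>x. xext N x (i - 1) \<le> xext N x i)" for i
    unfolding pred_def by (rule borel_measurable_le) measurable
  then have "{x \<in> space (leb_N N). \<forall>i\<in>{1..N}. xext N x (i - 1) \<le> xext N x i} \<in> sets (leb_N N)"
    unfolding pred_def[symmetric] by (intro pred_intros_finite) auto
  then show ?thesis by (simp add: Omega_def leb_N_def space_PiM)
qed

lemma pi_density_measurable [measurable]: "pi_density N \<alpha> \<in> borel_measurable (leb_N N)"
  unfolding pi_density_def by measurable

lemma xext_mono:
  assumes "x \<in> Omega N" "j \<le> k" "k \<le> N"
  shows "xext N x j \<le> xext N x k"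
  using assms(2,3)
proof (induction k)
  case (Suc k)
  show ?case
  proof (cases "j = Suc k")
    case False
    then have "xext N x j \<le> xext N x k" using Suc by simp
    also have "\<dots> \<le> xext N x (Suc k)"
      using assms(1) Suc.prems unfolding Omega_def by (auto dest!: bspec[of _ _ "Suc k"])
    finally show ?thesis .
  qed simp
qed simp

lemma Omega_coordinate_bounds:
  assumes "x \<in> Omega N" "i \<in> {1..<N}"
  shows "0 \<le> x i" "x i \<le> real N"
  using xext_mono[OF assms(1), of 0 i] xext_mono[OF assms(1), of i N] assms(2)
  by (auto simp: xext_def)

lemma xext_sup: "xext N (sup x y) i = max (xext N x i) (xext N y i)"
  and xext_inf: "xext N (inf x y) i = min (xext N x i) (xext N y i)"
  by (simp_all add: xext_def sup_max inf_min)

lemma Omega_sup: "x \<in> Omega N \<Longrightarrow> y \<in> Omega N \<Longrightarrow> sup x y \<in> Omega N"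
  and Omega_inf: "x \<in> Omega N \<Longrightarrow> y \<in> Omega N \<Longrightarrow> inf x y \<in> Omega N"
  unfolding Omega_def
  by (auto simp: xext_sup xext_inf PiE_def extensional_def intro: max.mono min.mono)

lemma norm_const_nonneg:
  assumes "0 < \<alpha>"
  shows "0 \<le> norm_const N \<alpha>"
proof -
  have "0 \<le> Gamma (real N * \<alpha>)" using assms by (cases "N = 0") auto
  then show ?thesis unfolding norm_const_def using assms by simp
qed

lemma pi_density_nonneg: "0 < \<alpha> \<Longrightarrow> 0 \<le> pi_density N \<alpha> x"
  unfolding pi_density_def by (intro mult_nonneg_nonneg prod_nonneg norm_const_nonneg) auto

lemma pi_density_log_supermodular:
  assumes "1 \<le> \<alpha>"
  shows "log_supermodular (pi_density N \<alpha>)"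
  unfolding log_supermodular_def
proof (intro allI)
  fix x y :: "nat \<Rightarrow> real"
  define F where "F z i = (xext N z i - xext N z (i - 1)) powr (\<alpha> - 1)" for z i
  define C where "C = norm_const N \<alpha>"
  have density: "pi_density N \<alpha> z = C * (\<Prod>i\<in>{1..N}. F z i)" if "z \<in> Omega N" for z
    using that by (simp add: pi_density_def F_def C_def)
  show "pi_density N \<alpha> x * pi_density N \<alpha> y \<le> pi_density N \<alpha> (sup x y) * pi_density N \<alpha> (inf x y)"
  proof (cases "x \<in> Omega N \<and> y \<in> Omega N")
    case False
    then show ?thesis
      using pi_density_nonneg assms by (auto simp: pi_density_def[of N \<alpha> x] pi_density_def[of N \<alpha> y])
  next
    case True
    have "0 \<le> C" unfolding C_def using assms by (intro norm_const_nonneg) simp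
    have factorwise: "F x i * F y i \<le> F (sup x y) i * F (inf x y) i" if "i \<in> {1..N}" for i
      using True that assms unfolding F_def xext_sup xext_inf Omega_def
      by (auto intro!: powr_diff_mult_le_max_min)
    have "(\<Prod>i\<in>{1..N}. F x i) * (\<Prod>i\<in>{1..N}. F y i) \<le> (\<Prod>i\<in>{1..N}. F (sup x y) i) * (\<Prod>i\<in>{1..N}. F (inf x y) i)"
      unfolding prod.distrib[symmetric] using factorwise by (intro prod_mono) (simp add: F_def)
    then show ?thesis
      using True Omega_sup Omega_inf \<open>0 \<le> C\<close>
      by (simp add: density mult_left_mono mult.assoc mult.left_commute)
  qed
qed

lemma increasing_fun_bounds:
  assumes "increasing_fun N f" "x \<in> Omega N"
  shows "f (restrict (\<lambda>_. 0) {1..<N}) \<le> f x" "f x \<le> f (restrict (\<lambda>_. real N) {1..<N})"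
proof -
  have "restrict (\<lambda>_. 0) {1..<N} \<in> Omega N" "restrict (\<lambda>_. real N) {1..<N} \<in> Omega N"
    by (auto simp: Omega_def xext_def)
  then show "f (restrict (\<lambda>_. 0) {1..<N}) \<le> f x" "f x \<le> f (restrict (\<lambda>_. real N) {1..<N})"
    using assms Omega_coordinate_bounds[OF assms(2)]
    unfolding increasing_fun_def coord_le_def by auto
qed

lemma increasing_setD:
  assumes "increasing_set N A" "y \<in> A" "z \<in> Omega N" "coord_le N y z"
  shows "z \<in> A"
  using assms unfolding increasing_set_def increasing_fun_def by (force simp: indicator_def)

lemma pi_measure_nn_integral_cross_le:
  assumes "1 \<le> \<alpha>" "A \<in> sets (leb_N N)" "B \<in> sets (leb_N N)"
    and "increasing_set N A" "B \<subseteq> Omega N" "\<And>x y. x \<in> A \<Longrightarrow> y \<in> B \<Longrightarrow> meet x y \<in> B"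
    and g: "g \<in> borel_measurable (leb_N N)" "increasing_fun N g"
  shows "(\<integral>\<^sup>+x. ennreal (g x) * indicator B x \<partial>pi_measure N \<alpha>) * emeasure (pi_measure N \<alpha>) A
      \<le> (\<integral>\<^sup>+x. ennreal (g x) * indicator A x \<partial>pi_measure N \<alpha>) * emeasure (pi_measure N \<alpha>) B"
  unfolding pi_measure_def
proof (rule nn_integral_density_cross_le_of_log_supermodular[where I = "{1..<N}", folded leb_N_def])
  fix x y assume "x \<in> B" "y \<in> A"
  have "A \<subseteq> Omega N" using assms(4) by (simp add: increasing_set_def)
  then have "x \<in> Omega N" and sup_Omega: "sup x y \<in> Omega N"
    using \<open>x \<in> B\<close> \<open>y \<in> A\<close> assms(5) Omega_sup by blast+
  have "sup x y \<in> A"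
    using increasing_setD[OF assms(4) \<open>y \<in> A\<close> sup_Omega] by (simp add: coord_le_def)
  moreover have "inf x y \<in> B"
    using assms(6)[OF \<open>y \<in> A\<close> \<open>x \<in> B\<close>] by (simp add: meet_def inf_fun_def inf_min min.commute)
  moreover have "g x \<le> g (sup x y)"
    using g(2) \<open>x \<in> Omega N\<close> sup_Omega unfolding increasing_fun_def coord_le_def by simp
  ultimately show "sup x y \<in> A \<and> inf x y \<in> B \<and> g x \<le> g (sup x y)" by blast
qed (use assms pi_density_nonneg pi_density_log_supermodular in simp_all)

theorem lemma2p4:
  fixes N :: nat and \<alpha> :: real
    and A B :: "(nat \<Rightarrow> real) set"
  assumes "\<alpha> \<ge> 1" and "N \<ge> 2"
    and "A \<in> sets (leb_N N)" and "B \<in> sets (leb_N N)"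
    and "increasing_set N A" and "increasing_set N B"
    and "measure (pi_measure N \<alpha>) A > 0" and "measure (pi_measure N \<alpha>) B > 0"
    and "\<And>x y. x \<in> A \<Longrightarrow> y \<in> B \<Longrightarrow> meet x y \<in> B"
  shows "\<forall>f. f \<in> borel_measurable (leb_N N) \<and> increasing_fun N f \<longrightarrow>
           cond_exp_set (pi_measure N \<alpha>) f A \<ge> cond_exp_set (pi_measure N \<alpha>) f B"
proof (intro allI impI, elim conjE)
  fix f :: "(nat \<Rightarrow> real) \<Rightarrow> real"
  assume f_measurable [measurable]: "f \<in> borel_measurable (leb_N N)" and f_inc: "increasing_fun N f"
  let ?\<pi> = "pi_measure N \<alpha>"
  define lo where "lo = f (restrict (\<lambda>_. 0) {1..<N})"
  define hi where "hi = f (restrict (\<lambda>_. real N) {1..<N})"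
  have Omega: "A \<subseteq> Omega N" "B \<subseteq> Omega N"
    using assms(5,6) by (simp_all add: increasing_set_def)
  have "(\<integral>\<^sup>+x. ennreal (f x - lo) * indicator B x \<partial>?\<pi>) * emeasure ?\<pi> A
      \<le> (\<integral>\<^sup>+x. ennreal (f x - lo) * indicator A x \<partial>?\<pi>) * emeasure ?\<pi> B"
    using assms(1,3-5,9) Omega f_inc
    by (intro pi_measure_nn_integral_cross_le) (auto simp: increasing_fun_def)
  then show "cond_exp_set ?\<pi> f B \<le> cond_exp_set ?\<pi> f A"
    using assms(3,4,7,8) Omega increasing_fun_bounds[OF f_inc]
    by (intro cond_exp_set_le_of_nn_integral_cross[where c = lo and C = hi])
      (auto simp: pi_measure_def lo_def hi_def)
qed

end
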